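(* Let $G$ be a connected graph with $|V(G)|\ge 3$ and $L(G)=2l(G)$. For any maximum matchings $F_L,F_l$ of $G$ with $\nu(G\setminus F_L)=L(G)$ and $\nu(G\setminus F_l)=l(G)$, every vertex of $G$ is covered by an edge of $F_L$ or by an edge of $F_l$, i.e. $V(F_L)\cup V(F_l)=V(G)$.
   Context: Graphs are finite, undirected, without loops or multiple edges. $\nu(G)$ denotes the maximum size of a matching of $G$; a matching is maximum if it has $\nu(G)$ edges. For $F\subseteq E(G)$, $G\setminus F$ is the graph with vertex set $V(G)$ and edge set $E(G)\setminus F$, and $V(F)$ is the set of vertices incident to some edge of $F$. Define $L(G)=\max\{\nu(G\setminus F): F \text{ a maximum matching of } G\}$ and $l(G)=\min\{\nu(G\setminus F): F \text{ a maximum matching of } G\}$. *)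

theory Defs
  imports Main
begin

definition simple_graph :: "'a set \<Rightarrow> 'a set set \<Rightarrow> bool" where
  "simple_graph V E \<longleftrightarrow> finite V \<and>
     (\<forall>e\<in>E. \<exists>u v. e = {u, v} \<and> u \<noteq> v \<and> u \<in> V \<and> v \<in> V)"

definition adj_rel :: "'a set set \<Rightarrow> ('a \<times> 'a) set" where
  "adj_rel E = {(x, y). {x, y} \<in> E}"

definition connected_graph :: "'a set \<Rightarrow> 'a set set \<Rightarrow> bool" where
  "connected_graph V E \<longleftrightarrow> (\<forall>u\<in>V. \<forall>v\<in>V. (u, v) \<in> (adj_rel E)\<^sup>*)"

definition matching :: "'a set set \<Rightarrow> 'a set set \<Rightarrow> bool" where
  "matching E M \<longleftrightarrow> M \<subseteq> E \<and> (\<forall>e1\<in>M. \<forall>e2\<in>M. e1 \<noteq> e2 \<longrightarrow> e1 \<inter> e2 = {})"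

text \<open>matching number \<nu>(G) (the graph G \<setminus> F has the same vertex set and
  edge set E - F; matchings do not depend on the vertex set).\<close>
definition nu :: "'a set set \<Rightarrow> nat" where
  "nu E = Max {card M | M. matching E M}"

definition max_matching :: "'a set set \<Rightarrow> 'a set set \<Rightarrow> bool" where
  "max_matching E M \<longleftrightarrow> matching E M \<and> card M = nu E"

definition L_num :: "'a set set \<Rightarrow> nat" where
  "L_num E = Max {nu (E - F) | F. max_matching E F}"

definition l_num :: "'a set set \<Rightarrow> nat" where
  "l_num E = Min {nu (E - F) | F. max_matching E F}"

definition covered :: "'a set set \<Rightarrow> 'a set" where
  "covered F = \<Union>F"

end

theory Submission
  imports Defs
begin

(* Put l = l(G) and let M be a maximum matching of G \ F_L, so
   |M| = L(G) = 2l.  The sets M - F_l and F_L - F_l are matchings of G \ F_l,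
   hence have at most l edges, while M \<inter> F_l and F_L \<inter> F_l are disjoint parts
   of F_l.  Counting forces both to have exactly l edges, i.e. to be maximum
   matchings of G \ F_l, and F_l \<subseteq> M \<union> F_L  (tight_decomposition).
   Now suppose a vertex v is covered by neither F_L nor F_l and let uv be an edge
   (connectivity).  Maximality of F_l, of F_L - F_l and of M - F_l in their graphs
   (no_free_edge) forces u to lie on an edge f of M \<inter> F_l and v to lie on an edge
   g of Q = M - F_l.  Every edge of Q then meets X = V(F_L - F_l) while the edges
   of F_l touching Q avoid X; so each edge of Q meets at most one such edge, and
   g meets none.  Exchanging these edges of F_l for Q yields a matching larger
   than F_l (exchange_enlarges), a contradiction (tight_pair_covers_vertex). *)

section \<open>Simple graphs and the matching number\<close>

lemma simple_graph_edge:
  "simple_graph V E \<Longrightarrow> e \<in> E \<Longrightarrow> \<exists>a b. e = {a, b} \<and> a \<noteq> b \<and> a \<in> V \<and> b \<in> V"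
  unfolding simple_graph_def by blast

lemma simple_graph_finite_edges:
  assumes "simple_graph V E" shows "finite E"
proof -
  have "E \<subseteq> Pow V" using simple_graph_edge[OF assms] by blast
  moreover have "finite V" using assms unfolding simple_graph_def by simp
  ultimately show ?thesis using finite_subset by blast
qed

lemma simple_graph_Diff: "simple_graph V E \<Longrightarrow> simple_graph V (E - F)"
  unfolding simple_graph_def by blast

lemma covered_subset_vertices:
  "simple_graph V E \<Longrightarrow> matching E F \<Longrightarrow> covered F \<subseteq> V"
  unfolding covered_def matching_def using simple_graph_edge by fastforce

lemma matching_Diff: "matching (E - F) M \<longleftrightarrow> matching E M \<and> M \<inter> F = {}"
  unfolding matching_def by blast

lemma matching_edge: "matching E M \<Longrightarrow> e \<in> M \<Longrightarrow> e \<in> E"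
  unfolding matching_def by auto

lemma matching_disjoint:
  "matching E M \<Longrightarrow> e1 \<in> M \<Longrightarrow> e2 \<in> M \<Longrightarrow> e1 \<inter> e2 \<noteq> {} \<Longrightarrow> e1 = e2"
  unfolding matching_def by auto

lemma matching_subset: "matching E M \<Longrightarrow> N \<subseteq> M \<Longrightarrow> matching E N"
  unfolding matching_def by blast

lemma matching_minus: "matching E M \<Longrightarrow> matching (E - F) (M - F)"
  unfolding matching_Diff using matching_subset by blast

lemma matching_finite: "finite E \<Longrightarrow> matching E M \<Longrightarrow> finite M"
  unfolding matching_def using finite_subset by blast

lemma finite_matching_sizes: "finite E \<Longrightarrow> finite {card M | M. matching E M}"
proof -
  assume fin: "finite E"
  have "{card M | M. matching E M} \<subseteq> {0..card E}"
    using card_mono[OF fin] unfolding matching_def by auto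
  thus ?thesis using finite_subset by blast
qed

lemma matching_card_le_nu: "finite E \<Longrightarrow> matching E M \<Longrightarrow> card M \<le> nu E"
  unfolding nu_def using finite_matching_sizes by (intro Max_ge) auto

lemma nu_attained: "finite E \<Longrightarrow> \<exists>M. matching E M \<and> card M = nu E"
proof -
  assume fin: "finite E"
  have "matching E {}" unfolding matching_def by auto
  hence "nu E \<in> {card M | M. matching E M}"
    unfolding nu_def using finite_matching_sizes[OF fin] by (intro Max_in) auto
  thus ?thesis by auto
qed

lemma no_free_edge:
  assumes sg: "simple_graph V E" and M: "matching E M" "card M = nu E" and e: "e \<in> E"
  shows "e \<inter> \<Union>M \<noteq> {}"
proof
  assume free: "e \<inter> \<Union>M = {}"
  have finE: "finite E" using simple_graph_finite_edges[OF sg] .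
  have "e \<noteq> {}" using simple_graph_edge[OF sg e] by blast
  hence "e \<notin> M" using free by blast
  have "matching E (insert e M)" using M(1) e free unfolding matching_def by blast
  hence "card (insert e M) \<le> nu E" using matching_card_le_nu[OF finE] by blast
  moreover have "card (insert e M) = card M + 1"
    using \<open>e \<notin> M\<close> matching_finite[OF finE M(1)] by simp
  ultimately show False using M(2) by simp
qed

lemma connected_neighbour:
  assumes "connected_graph V E" "2 \<le> card V" "v \<in> V"
  shows "\<exists>u. {v, u} \<in> E"
proof -
  have "card (V - {v}) > 0" using assms(2,3) by (simp add: card_Diff_singleton)
  then obtain t where "t \<in> V" "t \<noteq> v" by (metis DiffE card_gt_0_iff ex_in_conv singletonI)
  hence "(v, t) \<in> (adj_rel E)\<^sup>*" using assms(1,3) unfolding connected_graph_def by blast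
  with \<open>t \<noteq> v\<close> obtain u where "(v, u) \<in> adj_rel E" by (metis converse_rtranclE)
  thus ?thesis unfolding adj_rel_def by auto
qed

section \<open>Counting: the two extremal matchings are tightly interlocked\<close>

lemma tight_decomposition:
  assumes finE: "finite E"
    and FL: "matching E FL" and Fl: "matching E Fl" and same_size: "card FL = card Fl"
    and M: "matching E M" "M \<inter> FL = {}" "card M = 2 * nu (E - Fl)"
  shows "card (M - Fl) = nu (E - Fl)" "card (FL - Fl) = nu (E - Fl)" "Fl \<subseteq> M \<union> FL"
proof -
  let ?l = "nu (E - Fl)"
  have finEFl: "finite (E - Fl)" using finE by simp
  have finM: "finite M" and finFL: "finite FL" and finFl: "finite Fl"
    using matching_finite[OF finE] M(1) FL Fl by auto
  have Q_le: "card (M - Fl) \<le> ?l"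
    using matching_card_le_nu[OF finEFl matching_minus[OF M(1)]] .
  have A_le: "card (FL - Fl) \<le> ?l"
    using matching_card_le_nu[OF finEFl matching_minus[OF FL]] .
  have Q_eq: "card (M - Fl) + card (M \<inter> Fl) = card M"
    using finM card_Diff_subset_Int[of M Fl] card_mono[of M "M \<inter> Fl"] by simp
  have A_eq: "card (FL - Fl) + card (FL \<inter> Fl) = card FL"
    using finFL card_Diff_subset_Int[of FL Fl] card_mono[of FL "FL \<inter> Fl"] by simp
  have parts: "card ((M \<inter> Fl) \<union> (FL \<inter> Fl)) = card (M \<inter> Fl) + card (FL \<inter> Fl)"
    using M(2) finM finFL by (intro card_Un_disjoint) auto
  have sub: "(M \<inter> Fl) \<union> (FL \<inter> Fl) \<subseteq> Fl" by blast
  have "card ((M \<inter> Fl) \<union> (FL \<inter> Fl)) \<le> card Fl" using card_mono[OF finFl sub] .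
  hence cards: "card (M - Fl) = ?l" "card (FL - Fl) = ?l"
      "card ((M \<inter> Fl) \<union> (FL \<inter> Fl)) = card Fl"
    using Q_le A_le Q_eq A_eq parts M(3) same_size by linarith+
  show "card (M - Fl) = ?l" "card (FL - Fl) = ?l" using cards(1,2) .
  have "(M \<inter> Fl) \<union> (FL \<inter> Fl) = Fl" using card_subset_eq[OF finFl sub cards(3)] .
  thus "Fl \<subseteq> M \<union> FL" by blast
qed

section \<open>An exchange argument\<close>

lemma exchange_matching:
  assumes F: "matching E F" and Q: "matching E Q"
  shows "matching E (Q \<union> {t \<in> F. t \<inter> \<Union>Q = {}})" (is "matching E ?N")
  unfolding matching_def
proof (intro conjI ballI impI)
  show "?N \<subseteq> E" using F Q unfolding matching_def by blast
next
  fix e1 e2 assume e: "e1 \<in> ?N" "e2 \<in> ?N" "e1 \<noteq> e2"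
  show "e1 \<inter> e2 = {}"
  proof (cases "e1 \<in> Q")
    case True
    then show ?thesis using e Q unfolding matching_def by blast
  next
    case False
    then show ?thesis using e F unfolding matching_def by blast
  qed
qed

lemma exchange_enlarges:
  assumes sg: "simple_graph V E"
    and F: "matching E F" and Q: "matching E Q" "Q \<inter> F = {}"
    and hit: "\<forall>q\<in>Q. q \<inter> X \<noteq> {}"
    and sep: "\<forall>t\<in>F. t \<inter> \<Union>Q \<noteq> {} \<longrightarrow> t \<inter> X = {}"
    and g: "g \<in> Q" "v \<in> g" "v \<notin> X" "v \<notin> \<Union>F"
  shows "card F < nu E"
proof -
  define T where "T = {t \<in> F. t \<inter> \<Union>Q \<noteq> {}}"
  have finE: "finite E" using simple_graph_finite_edges[OF sg] .
  have finF: "finite F" and finQ: "finite Q" using matching_finite[OF finE] F Q(1) by auto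
  have one_outside: "a = b" if qQ: "q \<in> Q" and ab: "a \<in> q - X" "b \<in> q - X" for q a b
  proof -
    obtain x y where q: "q = {x, y}"
      using simple_graph_edge[OF sg matching_edge[OF Q(1) qQ]] by blast
    have "q \<inter> X \<noteq> {}" using hit qQ by blast
    thus ?thesis using ab unfolding q by auto
  qed
  have T_outside: "t \<inter> X = {}" if "t \<in> T" for t
    using sep that unfolding T_def by blast
  define \<phi> where "\<phi> t = (SOME q. q \<in> Q \<and> t \<inter> q \<noteq> {})" for t
  have \<phi>: "\<phi> t \<in> Q \<and> t \<inter> \<phi> t \<noteq> {}" if "t \<in> T" for t
  proof -
    have "\<exists>q. q \<in> Q \<and> t \<inter> q \<noteq> {}" using that unfolding T_def by blast
    thus ?thesis unfolding \<phi>_def by (rule someI_ex)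
  qed
  have inj: "inj_on \<phi> T"
  proof (rule inj_onI)
    fix t1 t2 assume t: "t1 \<in> T" "t2 \<in> T" "\<phi> t1 = \<phi> t2"
    obtain z1 where z1: "z1 \<in> t1" "z1 \<in> \<phi> t1" using \<phi>[OF t(1)] by blast
    obtain z2 where z2: "z2 \<in> t2" "z2 \<in> \<phi> t1" using \<phi>[OF t(2)] t(3) by blast
    have "z1 \<notin> X" "z2 \<notin> X" using z1(1) z2(1) T_outside t(1,2) by blast+
    hence "z1 = z2" using one_outside[of "\<phi> t1" z1 z2] \<phi>[OF t(1)] z1(2) z2(2) by blast
    hence "t1 \<inter> t2 \<noteq> {}" using z1(1) z2(1) by blast
    moreover have "t1 \<in> F" "t2 \<in> F" using t(1,2) unfolding T_def by auto
    ultimately show "t1 = t2" using matching_disjoint[OF F] by blast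
  qed
  have avoid_g: "\<phi> t \<noteq> g" if t: "t \<in> T" for t
  proof
    assume "\<phi> t = g"
    then obtain w where w: "w \<in> t" "w \<in> g" using \<phi>[OF t] by blast
    have "w \<notin> X" using w(1) T_outside[OF t] by blast
    hence "w = v" using one_outside[OF g(1)] g(2,3) w(2) by blast
    moreover have "t \<in> F" using t unfolding T_def by simp
    ultimately show False using w(1) g(4) by blast
  qed
  have "\<phi> ` T \<subseteq> Q - {g}" using \<phi> avoid_g by blast
  hence "card T \<le> card (Q - {g})" using card_inj_on_le[OF inj] finQ by simp
  also have "\<dots> < card Q" using card_Diff1_less[OF finQ g(1)] .
  finally have T_less: "card T < card Q" .
  have T_sub: "T \<subseteq> F" unfolding T_def by blast
  have "F - T = {t \<in> F. t \<inter> \<Union>Q = {}}" unfolding T_def by blast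
  hence N: "matching E (Q \<union> (F - T))" using exchange_matching[OF F Q(1)] by simp
  have "card (Q \<union> (F - T)) = card Q + card (F - T)"
    using Q(2) finQ finF by (intro card_Un_disjoint) auto
  also have "card (F - T) = card F - card T" using card_Diff_subset[OF _ T_sub] finF T_sub
    by (simp add: finite_subset)
  finally have "card F < card (Q \<union> (F - T))" using T_less card_mono[OF finF T_sub] by linarith
  thus ?thesis using matching_card_le_nu[OF finE N] by linarith
qed

lemma tight_pair_covers_vertex:
  assumes sg: "simple_graph V E"
    and Fl: "matching E Fl" "card Fl = nu E" and FL: "matching E FL"
    and M: "matching E M" "M \<inter> FL = {}"
    and A_max: "card (FL - Fl) = nu (E - Fl)" and Q_max: "card (M - Fl) = nu (E - Fl)"
    and cover: "Fl \<subseteq> M \<union> FL"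
    and uv: "{v, u} \<in> E"
  shows "v \<in> covered FL \<union> covered Fl"
proof (rule ccontr)
  assume "v \<notin> covered FL \<union> covered Fl"
  hence vFL: "v \<notin> \<Union>FL" and vFl: "v \<notin> \<Union>Fl" unfolding covered_def by auto
  have sg': "simple_graph V (E - Fl)" using simple_graph_Diff[OF sg] .
  have mA: "matching (E - Fl) (FL - Fl)" and mQ: "matching (E - Fl) (M - Fl)"
    using matching_minus FL M(1) by blast+
  have uv': "{v, u} \<in> E - Fl" using uv vFl by blast
  obtain f where f: "f \<in> Fl" "u \<in> f" using no_free_edge[OF sg Fl uv] vFl by blast
  \<comment> \<open>If \<open>f \<in> F\<^sub>L\<close>, then \<open>uv\<close> could be added to the maximum matching \<open>F\<^sub>L - F\<^sub>l\<close>.\<close>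
  have "f \<notin> FL"
  proof
    assume "f \<in> FL"
    hence "u \<notin> \<Union>(FL - Fl)" using f matching_disjoint[OF FL] by blast
    thus False using no_free_edge[OF sg' mA A_max uv'] vFL by blast
  qed
  hence fM: "f \<in> M" using cover f(1) by blast
  \<comment> \<open>So \<open>u\<close> is covered in \<open>M\<close> only by \<open>f \<in> F\<^sub>l\<close>, and \<open>v\<close> must lie on an edge \<open>g\<close> of \<open>M - F\<^sub>l\<close>.\<close>
  have "u \<notin> \<Union>(M - Fl)" using f fM matching_disjoint[OF M(1)] by blast
  then obtain g where g: "g \<in> M - Fl" "v \<in> g"
    using no_free_edge[OF sg' mQ Q_max uv'] by blast
  have hit: "\<forall>q\<in>M - Fl. q \<inter> \<Union>(FL - Fl) \<noteq> {}"
    using no_free_edge[OF sg' mA A_max] matching_edge[OF mQ] by blast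
  \<comment> \<open>An edge of \<open>F\<^sub>l\<close> meeting \<open>M - F\<^sub>l\<close> is not in \<open>M\<close>, hence lies in \<open>F\<^sub>L \<inter> F\<^sub>l\<close>.\<close>
  have sep: "\<forall>t\<in>Fl. t \<inter> \<Union>(M - Fl) \<noteq> {} \<longrightarrow> t \<inter> \<Union>(FL - Fl) = {}"
  proof (intro ballI impI)
    fix t assume t: "t \<in> Fl" "t \<inter> \<Union>(M - Fl) \<noteq> {}"
    have "t \<notin> M" using t matching_disjoint[OF M(1)] by blast
    hence "t \<in> FL" using cover t(1) by blast
    thus "t \<inter> \<Union>(FL - Fl) = {}" using t(1) matching_disjoint[OF FL] by blast
  qed
  have "card Fl < nu E"
    using exchange_enlarges[OF sg Fl(1) matching_subset[OF M(1)] _ hit sep g] vFL vFl by blast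
  thus False using Fl(2) by simp
qed

theorem claim1:
  fixes V :: "'a set" and E :: "'a set set" and FL Fl :: "'a set set"
  assumes "simple_graph V E"
    and "connected_graph V E"
    and "card V \<ge> 3"
    and "L_num E = 2 * l_num E"
    and "max_matching E FL" and "nu (E - FL) = L_num E"
    and "max_matching E Fl" and "nu (E - Fl) = l_num E"
  shows "covered FL \<union> covered Fl = V"
proof -
  have finE: "finite E" using simple_graph_finite_edges[OF assms(1)] .
  have FL: "matching E FL" "card FL = nu E" and Fl: "matching E Fl" "card Fl = nu E"
    using assms(5,7) unfolding max_matching_def by auto
  obtain M where M': "matching (E - FL) M" "card M = nu (E - FL)"
    using nu_attained[of "E - FL"] finE by auto
  have M: "matching E M" "M \<inter> FL = {}" "card M = 2 * nu (E - Fl)"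
    using M' matching_Diff assms(4,6,8) by auto
  have "card FL = card Fl" using FL(2) Fl(2) by simp
  note tight = tight_decomposition[OF finE FL(1) Fl(1) this M]
  show ?thesis
  proof
    show "covered FL \<union> covered Fl \<subseteq> V"
      using covered_subset_vertices[OF assms(1)] FL(1) Fl(1) by blast
    show "V \<subseteq> covered FL \<union> covered Fl"
    proof
      fix v assume "v \<in> V"
      then obtain u where "{v, u} \<in> E" using connected_neighbour assms(2,3) by fastforce
      thus "v \<in> covered FL \<union> covered Fl"
        using tight_pair_covers_vertex[OF assms(1) Fl FL(1) M(1,2) tight(2,1,3)] by simp
    qed
  qed
qed

end
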